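(* In the setting below, suppose $u(s,t,q)=l(s,q)U(t)$, $v(s,t,q)=m(s,q)V(t)$, $w(s,t,q)=n(s,q)W(t)$, $x(s,t,q)=p(s,q)X(t)$ with all factors of class $C^1$, and assume $U(t_0)=U'(t_0)=V(t_0)=V'(t_0)=0$. Then $\mathbf r$ is an isogeodesic of $\mathbf P$ at $(t_0,q_0)$ if and only if for all $s\in[L_1,L_2]$: $$n(s,q_0)W(t_0)=0,\qquad p(s,q_0)X(t_0)=0,$$ $$n(s,q_0)\,W'(t_0)\,\frac{\partial p}{\partial q}(s,q_0)\,X(t_0)-\frac{\partial n}{\partial q}(s,q_0)\,W(t_0)\,p(s,q_0)\,X'(t_0)\neq0.$$
   Context: $\mathbf r:[L_1,L_2]\to\mathbb R^4$ is an arc-length curve with Frenet frame $\{\mathbf T,\mathbf N,\mathbf B_1,\mathbf B_2\}$ (orthonormal, $\mathbf T=\mathbf r'$, $\mathbf T'=k_1\mathbf N$, $\mathbf N'=-k_1\mathbf T+k_2\mathbf B_1$, $\mathbf B_1'=-k_2\mathbf N+k_3\mathbf B_2$, $\mathbf B_2'=-k_3\mathbf B_1$, $k_1>0$), and $\mathbf P(s,t,q)=\mathbf r(s)+u\mathbf T(s)+v\mathbf N(s)+w\mathbf B_1(s)+x\mathbf B_2(s)$ on $[L_1,L_2]\times[T_1,T_2]\times[Q_1,Q_2]$, with $t_0\in[T_1,T_2]$, $q_0\in[Q_1,Q_2]$ fixed. "$\mathbf r$ is an isogeodesic of $\mathbf P$ at $(t_0,q_0)$" means: $\mathbf P(s,t_0,q_0)=\mathbf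 r(s)$ for all $s$, $\partial_s\mathbf P,\partial_t\mathbf P,\partial_q\mathbf P$ are linearly independent at $(s,t_0,q_0)$, and $\mathbf N(s)$ is parallel to the normal $\partial_s\mathbf P\otimes\partial_t\mathbf P\otimes\partial_q\mathbf P$ (four-dimensional vector product) at $(s,t_0,q_0)$, for all $s$. *)

theory Defs
  imports "HOL-Analysis.Analysis"
begin

definition C1_on :: "'a::real_normed_vector set \<Rightarrow> ('a \<Rightarrow> 'b::real_normed_vector) \<Rightarrow> bool" where
  "C1_on S f \<longleftrightarrow> (\<exists>f'. continuous_on S f' \<and>
      (\<forall>z\<in>S. (f has_derivative blinfun_apply (f' z)) (at z within S)))"

text \<open>Four-dimensional vector product a (x) b (x) c: the formal determinant with
  rows e_1..e_4 (first row), a, b, c; its i-th component is the determinant with first row e_i.\<close>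
definition cross4 :: "real^4 \<Rightarrow> real^4 \<Rightarrow> real^4 \<Rightarrow> real^4" where
  "cross4 a b c = (\<chi> i. det ((\<chi> j. if j = 1 then axis i 1 else if j = 2 then a
                                   else if j = 3 then b else c) :: real^4^4))"

definition lin_indep3 :: "'a::real_vector \<Rightarrow> 'a \<Rightarrow> 'a \<Rightarrow> bool" where
  "lin_indep3 a b c \<longleftrightarrow> (\<forall>\<alpha> \<beta> \<gamma>::real. \<alpha> *\<^sub>R a + \<beta> *\<^sub>R b + \<gamma> *\<^sub>R c = 0 \<longrightarrow> \<alpha> = 0 \<and> \<beta> = 0 \<and> \<gamma> = 0)"

definition parallel :: "'a::real_vector \<Rightarrow> 'a \<Rightarrow> bool" where
  "parallel a b \<longleftrightarrow> (\<exists>c::real. a = c *\<^sub>R b \<or> b = c *\<^sub>R a)"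

definition frenet4 ::
  "real \<Rightarrow> real \<Rightarrow> (real \<Rightarrow> real^4) \<Rightarrow> (real \<Rightarrow> real^4) \<Rightarrow> (real \<Rightarrow> real^4) \<Rightarrow>
   (real \<Rightarrow> real^4) \<Rightarrow> (real \<Rightarrow> real^4) \<Rightarrow> (real \<Rightarrow> real) \<Rightarrow> (real \<Rightarrow> real) \<Rightarrow> (real \<Rightarrow> real) \<Rightarrow> bool"
  where
  "frenet4 L1 L2 r T N B1 B2 k1 k2 k3 \<longleftrightarrow>
     (\<forall>s\<in>{L1..L2}.
        T s \<bullet> T s = 1 \<and> N s \<bullet> N s = 1 \<and> B1 s \<bullet> B1 s = 1 \<and> B2 s \<bullet> B2 s = 1 \<and>
        T s \<bullet> N s = 0 \<and> T s \<bullet> B1 s = 0 \<and> T s \<bullet> B2 s = 0 \<and>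
        N s \<bullet> B1 s = 0 \<and> N s \<bullet> B2 s = 0 \<and> B1 s \<bullet> B2 s = 0 \<and>
        (r has_vector_derivative T s) (at s within {L1..L2}) \<and>
        (T has_vector_derivative (k1 s *\<^sub>R N s)) (at s within {L1..L2}) \<and>
        (N has_vector_derivative (- k1 s *\<^sub>R T s + k2 s *\<^sub>R B1 s)) (at s within {L1..L2}) \<and>
        (B1 has_vector_derivative (- k2 s *\<^sub>R N s + k3 s *\<^sub>R B2 s)) (at s within {L1..L2}) \<and>
        (B2 has_vector_derivative (- k3 s *\<^sub>R B1 s)) (at s within {L1..L2}) \<and>
        k1 s > 0)"

definition isogeodesic ::
  "real \<Rightarrow> real \<Rightarrow> real \<Rightarrow> real \<Rightarrow> real \<Rightarrow> real \<Rightarrow> (real \<Rightarrow> real^4) \<Rightarrow> (real \<Rightarrow> real^4) \<Rightarrow>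
   (real \<Rightarrow> real \<Rightarrow> real \<Rightarrow> real^4) \<Rightarrow> real \<Rightarrow> real \<Rightarrow> bool" where
  "isogeodesic L1 L2 T1 T2 Q1 Q2 r N P t0 q0 \<longleftrightarrow>
     (\<forall>s\<in>{L1..L2}.
        P s t0 q0 = r s \<and>
        (let Ps = vector_derivative (\<lambda>\<sigma>. P \<sigma> t0 q0) (at s within {L1..L2});
             Pt = vector_derivative (\<lambda>\<tau>. P s \<tau> q0) (at t0 within {T1..T2});
             Pq = vector_derivative (\<lambda>\<rho>. P s t0 \<rho>) (at q0 within {Q1..Q2})
         in lin_indep3 Ps Pt Pq \<and> parallel (N s) (cross4 Ps Pt Pq)))"

end

theory Submission
  imports Defs
begin

text \<open>At \<open>(t0, q0)\<close> the \<open>T\<close>- and \<open>N\<close>-components of \<open>P\<close> vanish to first order in \<open>t\<close> and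
  identically in \<open>q\<close>, so \<open>P_t\<close> and \<open>P_q\<close> lie in the plane spanned by \<open>B1, B2\<close>, while
  \<open>P(s, t0, q0) = r(s)\<close> forces \<open>P_s = T\<close>. A vector product of \<open>T\<close> with two vectors of that plane
  is orthogonal to \<open>T, B1, B2\<close>, hence parallel to \<open>N\<close>; so linear independence and the normal
  condition both reduce to the non-vanishing of the \<open>2\<times>2\<close> determinant of the
  \<open>(B1, B2)\<close>-coordinates of \<open>P_t\<close> and \<open>P_q\<close>.\<close>

definition rows4 :: "real^4 \<Rightarrow> real^4 \<Rightarrow> real^4 \<Rightarrow> real^4 \<Rightarrow> real^4^4" where
  "rows4 v a b c = (\<chi> j. if j = 1 then v else if j = 2 then a else if j = 3 then b else c)"

lemma inner_cross4_det: "cross4 a b c \<bullet> v = det (rows4 v a b c)"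
proof -
  let ?R = "\<lambda>j::4. if j = 2 then a else if j = 3 then b else c"
  have "cross4 a b c \<bullet> v
      = (\<Sum>i\<in>UNIV. v$i * det ((\<chi> j. if j = 1 then axis i 1 else ?R j) :: real^4^4))"
    unfolding cross4_def inner_vec_def by (simp add: mult.commute)
  also have "\<dots> = (\<Sum>i\<in>UNIV. det ((\<chi> j. if j = 1 then v$i *s axis i 1 else ?R j) :: real^4^4))"
    by (subst det_row_mul) simp
  also have "\<dots> = det ((\<chi> j. if j = 1 then (\<Sum>i\<in>UNIV. v$i *s axis i 1) else ?R j) :: real^4^4)"
    by (subst det_linear_row_sum) simp_all
  also have "\<dots> = det (rows4 v a b c)"
    unfolding basis_expansion rows4_def by simp
  finally show ?thesis .
qed

lemma cross4_orthogonal: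
  shows "cross4 a b c \<bullet> a = 0" and "cross4 a b c \<bullet> b = 0" and "cross4 a b c \<bullet> c = 0"
  unfolding inner_cross4_det rows4_def
  by (rule det_identical_rows[of 1 2] det_identical_rows[of 1 3] det_identical_rows[of 1 4];
      simp add: row_def)+

definition orthonormal_frame :: "'a::real_inner \<Rightarrow> 'a \<Rightarrow> 'a \<Rightarrow> 'a \<Rightarrow> bool" where
  "orthonormal_frame e1 e2 e3 e4 \<longleftrightarrow>
     e1 \<bullet> e1 = 1 \<and> e2 \<bullet> e2 = 1 \<and> e3 \<bullet> e3 = 1 \<and> e4 \<bullet> e4 = 1 \<and>
     e1 \<bullet> e2 = 0 \<and> e1 \<bullet> e3 = 0 \<and> e1 \<bullet> e4 = 0 \<and>
     e2 \<bullet> e3 = 0 \<and> e2 \<bullet> e4 = 0 \<and> e3 \<bullet> e4 = 0"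

lemma frenet4_orthonormal_frame:
  assumes "frenet4 L1 L2 r T N B1 B2 k1 k2 k3" and "s \<in> {L1..L2}"
  shows "orthonormal_frame (T s) (N s) (B1 s) (B2 s)"
  using assms unfolding frenet4_def orthonormal_frame_def by blast

lemma frenet4_has_vector_derivative:
  assumes "frenet4 L1 L2 r T N B1 B2 k1 k2 k3"
  shows "\<forall>s\<in>{L1..L2}. (r has_vector_derivative T s) (at s within {L1..L2})"
  using assms unfolding frenet4_def by blast

lemma orthonormal_frame_orthogonal_expansion:
  fixes e1 e2 e3 e4 v :: "'a::euclidean_space"
  assumes "DIM('a) = 4" and "orthonormal_frame e1 e2 e3 e4"
    and "v \<bullet> e1 = 0" and "v \<bullet> e3 = 0" and "v \<bullet> e4 = 0"
  shows "v = (v \<bullet> e2) *\<^sub>R e2"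
proof (rule ccontr)
  define w where "w = v - (v \<bullet> e2) *\<^sub>R e2"
  assume "v \<noteq> (v \<bullet> e2) *\<^sub>R e2"
  hence "w \<noteq> 0" unfolding w_def by simp
  have w: "w \<bullet> e1 = 0" "w \<bullet> e2 = 0" "w \<bullet> e3 = 0" "w \<bullet> e4 = 0"
    using assms unfolding w_def orthonormal_frame_def
    by (simp_all add: inner_diff_left inner_diff_right inner_commute)
  let ?S = "{e1, e2, e3, e4, w}"
  have "pairwise orthogonal ?S" and "0 \<notin> ?S"
    using assms(2) w \<open>w \<noteq> 0\<close> unfolding pairwise_def orthogonal_def orthonormal_frame_def
    by (auto simp: inner_commute)
  hence "card ?S \<le> 4"
    using pairwise_orthogonal_independent independent_bound assms(1) by metis
  moreover have "card ?S = 5"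
  proof -
    have "e1 \<noteq> e2" "e1 \<noteq> e3" "e1 \<noteq> e4" "e1 \<noteq> w" "e2 \<noteq> e3" "e2 \<noteq> e4" "e2 \<noteq> w"
      "e3 \<noteq> e4" "e3 \<noteq> w" "e4 \<noteq> w"
      using assms(2) w \<open>w \<noteq> 0\<close> unfolding orthonormal_frame_def
      by (metis zero_neq_one)+
    thus ?thesis by simp
  qed
  ultimately show False by simp
qed

lemma det2_nonzero_trivial_kernel:
  fixes a b c d x y :: real
  assumes "a * d - b * c \<noteq> 0" and "a * x + b * y = 0" and "c * x + d * y = 0"
  shows "x = 0 \<and> y = 0"
proof -
  have "x * (a * d - b * c) = d * (a * x + b * y) - b * (c * x + d * y)"
    and "y * (a * d - b * c) = a * (c * x + d * y) - c * (a * x + b * y)"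
    by (simp_all add: algebra_simps)
  with assms(2,3) have "x * (a * d - b * c) = 0" and "y * (a * d - b * c) = 0" by simp_all
  with assms(1) show ?thesis by simp
qed

lemma not_lin_indep3_if_det_zero:
  fixes u v x :: "'a::real_vector"
  assumes "a * d - b * c = 0"
  shows "\<not> lin_indep3 x (a *\<^sub>R u + b *\<^sub>R v) (c *\<^sub>R u + d *\<^sub>R v)"
proof
  assume indep: "lin_indep3 x (a *\<^sub>R u + b *\<^sub>R v) (c *\<^sub>R u + d *\<^sub>R v)"
  have trivial: "\<beta> = 0 \<and> \<gamma> = 0" if "\<beta> * a + \<gamma> * c = 0" "\<beta> * b + \<gamma> * d = 0" for \<beta> \<gamma>
  proof -
    have "0 *\<^sub>R x + \<beta> *\<^sub>R (a *\<^sub>R u + b *\<^sub>R v) + \<gamma> *\<^sub>R (c *\<^sub>R u + d *\<^sub>R v)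
          = (\<beta> * a + \<gamma> * c) *\<^sub>R u + (\<beta> * b + \<gamma> * d) *\<^sub>R v"
      by (simp add: algebra_simps)
    also have "\<dots> = 0" using that by simp
    finally show ?thesis using indep unfolding lin_indep3_def by blast
  qed
  \<comment> \<open>the rows \<open>(d, -b)\<close> and \<open>(c, -a)\<close> of the adjugate annihilate the coefficient matrix\<close>
  have "d = 0 \<and> b = 0" using trivial[of d "-b"] assms by (simp add: algebra_simps)
  moreover have "c = 0 \<and> a = 0" using trivial[of c "-a"] assms by (simp add: algebra_simps)
  ultimately show False using trivial[of 1 0] by simp
qed

lemma lin_indep3_if_det_nonzero:
  fixes e1 e2 e3 :: "'a::real_inner"
  assumes "e1 \<bullet> e1 = 1" "e2 \<bullet> e2 = 1" "e3 \<bullet> e3 = 1"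
    and "e1 \<bullet> e2 = 0" "e1 \<bullet> e3 = 0" "e2 \<bullet> e3 = 0"
    and "a * d - b * c \<noteq> 0"
  shows "lin_indep3 e1 (a *\<^sub>R e2 + b *\<^sub>R e3) (c *\<^sub>R e2 + d *\<^sub>R e3)"
  unfolding lin_indep3_def
proof (intro allI impI)
  fix \<alpha> \<beta> \<gamma> :: real
  assume "\<alpha> *\<^sub>R e1 + \<beta> *\<^sub>R (a *\<^sub>R e2 + b *\<^sub>R e3) + \<gamma> *\<^sub>R (c *\<^sub>R e2 + d *\<^sub>R e3) = 0"
    (is "?z = 0")
  hence "e1 \<bullet> ?z = 0" "e2 \<bullet> ?z = 0" "e3 \<bullet> ?z = 0" by simp_all
  hence \<alpha>: "\<alpha> = 0" and eq: "\<beta> * a + \<gamma> * c = 0" "\<beta> * b + \<gamma> * d = 0"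
    using assms by (simp_all add: inner_add_right inner_commute)
  have "a * d - c * b \<noteq> 0" "a * \<beta> + c * \<gamma> = 0" "b * \<beta> + d * \<gamma> = 0"
    using assms(7) eq by (simp_all add: mult.commute)
  hence "\<beta> = 0 \<and> \<gamma> = 0" by (rule det2_nonzero_trivial_kernel)
  with \<alpha> show "\<alpha> = 0 \<and> \<beta> = 0 \<and> \<gamma> = 0" by simp
qed

lemma parallel_cross4_if_det_nonzero:
  assumes "orthonormal_frame T N B1 B2" and "a * d - b * c \<noteq> 0"
  shows "parallel N (cross4 T (a *\<^sub>R B1 + b *\<^sub>R B2) (c *\<^sub>R B1 + d *\<^sub>R B2))"
proof -
  define C where "C = cross4 T (a *\<^sub>R B1 + b *\<^sub>R B2) (c *\<^sub>R B1 + d *\<^sub>R B2)"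
  have "C \<bullet> T = 0" and eq: "a * (C \<bullet> B1) + b * (C \<bullet> B2) = 0" "c * (C \<bullet> B1) + d * (C \<bullet> B2) = 0"
    using cross4_orthogonal unfolding C_def by (metis inner_add_right inner_scaleR_right)+
  have "C \<bullet> B1 = 0 \<and> C \<bullet> B2 = 0" by (rule det2_nonzero_trivial_kernel[OF assms(2) eq])
  with \<open>C \<bullet> T = 0\<close> have "C = (C \<bullet> N) *\<^sub>R N"
    by (intro orthonormal_frame_orthogonal_expansion[OF _ assms(1)]) simp_all
  thus ?thesis unfolding parallel_def C_def by blast
qed

lemma binormal_plane_isogeodesic_condition_iff:
  assumes "orthonormal_frame T N B1 B2"
  shows "lin_indep3 T (a *\<^sub>R B1 + b *\<^sub>R B2) (c *\<^sub>R B1 + d *\<^sub>R B2)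
           \<and> parallel N (cross4 T (a *\<^sub>R B1 + b *\<^sub>R B2) (c *\<^sub>R B1 + d *\<^sub>R B2))
         \<longleftrightarrow> a * d - b * c \<noteq> 0"
proof
  assume "a * d - b * c \<noteq> 0"
  with assms show "lin_indep3 T (a *\<^sub>R B1 + b *\<^sub>R B2) (c *\<^sub>R B1 + d *\<^sub>R B2)
           \<and> parallel N (cross4 T (a *\<^sub>R B1 + b *\<^sub>R B2) (c *\<^sub>R B1 + d *\<^sub>R B2))"
    unfolding orthonormal_frame_def
    by (simp add: lin_indep3_if_det_nonzero parallel_cross4_if_det_nonzero[OF assms])
qed (use not_lin_indep3_if_det_zero in blast)

lemma binormal_combination_eq_0_iff:
  assumes "orthonormal_frame T N B1 B2"
  shows "a *\<^sub>R B1 + b *\<^sub>R B2 = 0 \<longleftrightarrow> a = 0 \<and> b = 0"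
proof
  assume "a *\<^sub>R B1 + b *\<^sub>R B2 = 0"
  hence "B1 \<bullet> (a *\<^sub>R B1 + b *\<^sub>R B2) = 0" "B2 \<bullet> (a *\<^sub>R B1 + b *\<^sub>R B2) = 0" by simp_all
  with assms show "a = 0 \<and> b = 0"
    unfolding orthonormal_frame_def by (simp add: inner_add_right inner_commute)
qed simp

lemma C1_on_has_vector_derivative:
  assumes "C1_on S f" and "t \<in> S"
  shows "(f has_vector_derivative vector_derivative f (at t within S)) (at t within S)"
proof -
  have "f differentiable (at t within S)"
    using assms unfolding C1_on_def by (auto intro: differentiableI)
  thus ?thesis by (simp add: vector_derivative_works[symmetric])
qed

lemma C1_on_Times_has_vector_derivative_snd:
  assumes "C1_on (A \<times> B) (\<lambda>(s, q). f s q)" and "s \<in> A" and "q \<in> B"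
  shows "(f s has_vector_derivative vector_derivative (f s) (at q within B)) (at q within B)"
proof -
  have "(\<lambda>(s, q). f s q) differentiable (at (s, q) within A \<times> B)"
    using assms unfolding C1_on_def by (auto intro: differentiableI)
  moreover have "Pair s ` B \<subseteq> A \<times> B" using assms(2) by auto
  ultimately have "(\<lambda>(s, q). f s q) differentiable (at (Pair s q) within Pair s ` B)"
    using differentiable_within_subset by metis
  moreover have "Pair s differentiable (at q within B)"
    by (rule differentiableI, rule has_derivative_Pair[OF has_derivative_const has_derivative_ident])
  ultimately have "((\<lambda>(s, q). f s q) \<circ> Pair s) differentiable (at q within B)"
    by (rule differentiable_chain_within[rotated])
  thus ?thesis by (simp add: o_def vector_derivative_works[symmetric])
qed

lemma vector_derivative_frame_combination:
  fixes e1 e2 e3 e4 :: "'a::euclidean_space"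
  assumes "a < b" and "t \<in> {a..b}"
    and "(f1 has_vector_derivative f1') (at t within {a..b})"
    and "(f2 has_vector_derivative f2') (at t within {a..b})"
    and "(f3 has_vector_derivative f3') (at t within {a..b})"
    and "(f4 has_vector_derivative f4') (at t within {a..b})"
  shows "vector_derivative (\<lambda>x. c + f1 x *\<^sub>R e1 + f2 x *\<^sub>R e2 + f3 x *\<^sub>R e3 + f4 x *\<^sub>R e4)
           (at t within {a..b})
         = f1' *\<^sub>R e1 + f2' *\<^sub>R e2 + f3' *\<^sub>R e3 + f4' *\<^sub>R e4"
proof -
  have "((\<lambda>x. c + f1 x *\<^sub>R e1 + f2 x *\<^sub>R e2 + f3 x *\<^sub>R e3 + f4 x *\<^sub>R e4)
          has_vector_derivative 0 + f1' *\<^sub>R e1 + f2' *\<^sub>R e2 + f3' *\<^sub>R e3 + f4' *\<^sub>R e4)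
         (at t within {a..b})"
    by (intro has_vector_derivative_add has_vector_derivative_const
        bounded_linear.has_vector_derivative[OF bounded_linear_scaleR_left, OF assms(3)]
        bounded_linear.has_vector_derivative[OF bounded_linear_scaleR_left, OF assms(4)]
        bounded_linear.has_vector_derivative[OF bounded_linear_scaleR_left, OF assms(5)]
        bounded_linear.has_vector_derivative[OF bounded_linear_scaleR_left, OF assms(6)])
  from vector_derivative_within_closed_interval[OF assms(1,2) this] show ?thesis by simp
qed

lemma isogeodesic_iff_along_curve:
  assumes "L1 < L2" and "\<forall>s\<in>{L1..L2}. (r has_vector_derivative T s) (at s within {L1..L2})"
  shows "isogeodesic L1 L2 T1 T2 Q1 Q2 r N P t0 q0 \<longleftrightarrow>
     (\<forall>s\<in>{L1..L2}. P s t0 q0 = r s) \<and>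
     (\<forall>s\<in>{L1..L2}.
        let Pt = vector_derivative (\<lambda>\<tau>. P s \<tau> q0) (at t0 within {T1..T2});
            Pq = vector_derivative (\<lambda>\<rho>. P s t0 \<rho>) (at q0 within {Q1..Q2})
        in lin_indep3 (T s) Pt Pq \<and> parallel (N s) (cross4 (T s) Pt Pq))"
proof -
  have Ps: "vector_derivative (\<lambda>\<sigma>. P \<sigma> t0 q0) (at s within {L1..L2}) = T s"
    if on_curve: "\<forall>s\<in>{L1..L2}. P s t0 q0 = r s" and s: "s \<in> {L1..L2}" for s
  proof (rule vector_derivative_within_closed_interval[OF assms(1) s])
    show "((\<lambda>\<sigma>. P \<sigma> t0 q0) has_vector_derivative T s) (at s within {L1..L2})"
      using on_curve by (intro has_vector_derivative_transform[OF s _ assms(2)[rule_format, OF s]])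
        simp
  qed
  show ?thesis
    unfolding isogeodesic_def Let_def ball_conj_distrib
    by (intro conj_cong refl) (auto simp: Ps)
qed

theorem mainTheorem4:
  fixes r T N B1 B2 :: "real \<Rightarrow> real^4"
    and k1 k2 k3 U V W X :: "real \<Rightarrow> real"
    and l m n p :: "real \<Rightarrow> real \<Rightarrow> real"
    and L1 L2 T1 T2 Q1 Q2 t0 q0 :: real
  assumes "L1 < L2" and "T1 < T2" and "Q1 < Q2"
    and "t0 \<in> {T1..T2}" and "q0 \<in> {Q1..Q2}"
    and "frenet4 L1 L2 r T N B1 B2 k1 k2 k3"
    and "C1_on ({L1..L2} \<times> {Q1..Q2}) (\<lambda>(s, q). l s q)"
    and "C1_on ({L1..L2} \<times> {Q1..Q2}) (\<lambda>(s, q). m s q)"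
    and "C1_on ({L1..L2} \<times> {Q1..Q2}) (\<lambda>(s, q). n s q)"
    and "C1_on ({L1..L2} \<times> {Q1..Q2}) (\<lambda>(s, q). p s q)"
    and "C1_on {T1..T2} U" and "C1_on {T1..T2} V"
    and "C1_on {T1..T2} W" and "C1_on {T1..T2} X"
    and "U t0 = 0" and "vector_derivative U (at t0 within {T1..T2}) = 0"
    and "V t0 = 0" and "vector_derivative V (at t0 within {T1..T2}) = 0"
  shows "isogeodesic L1 L2 T1 T2 Q1 Q2 r N
           (\<lambda>s t q. r s + (l s q * U t) *\<^sub>R T s + (m s q * V t) *\<^sub>R N s
                      + (n s q * W t) *\<^sub>R B1 s + (p s q * X t) *\<^sub>R B2 s) t0 q0
         \<longleftrightarrow>
         (\<forall>s\<in>{L1..L2}.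
            n s q0 * W t0 = 0 \<and> p s q0 * X t0 = 0 \<and>
            n s q0 * vector_derivative W (at t0 within {T1..T2})
              * vector_derivative (\<lambda>q. p s q) (at q0 within {Q1..Q2}) * X t0
            - vector_derivative (\<lambda>q. n s q) (at q0 within {Q1..Q2}) * W t0 * p s q0
              * vector_derivative X (at t0 within {T1..T2}) \<noteq> 0)"
    (is "isogeodesic _ _ _ _ _ _ _ _ ?P _ _ \<longleftrightarrow> _")
proof -
  let ?I = "{L1..L2}" and ?J = "{T1..T2}" and ?K = "{Q1..Q2}"
  let ?W' = "vector_derivative W (at t0 within ?J)" and ?X' = "vector_derivative X (at t0 within ?J)"
  let ?nq = "\<lambda>s. vector_derivative (\<lambda>q. n s q) (at q0 within ?K)"
    and ?pq = "\<lambda>s. vector_derivative (\<lambda>q. p s q) (at q0 within ?K)"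
  note frame = frenet4_orthonormal_frame[OF assms(6)]
  have on_curve: "?P s t0 q0 = r s \<longleftrightarrow> n s q0 * W t0 = 0 \<and> p s q0 * X t0 = 0" if "s \<in> ?I" for s
    using binormal_combination_eq_0_iff[OF frame[OF that]] assms(15,17) by (simp add: add.assoc)
  note dt = has_vector_derivative_mult_right[OF C1_on_has_vector_derivative[OF _ assms(4)]]
  note dq = has_vector_derivative_mult_left[OF C1_on_Times_has_vector_derivative_snd[OF _ _ assms(5)]]
  have Pt: "vector_derivative (\<lambda>\<tau>. ?P s \<tau> q0) (at t0 within ?J)
      = (n s q0 * ?W') *\<^sub>R B1 s + (p s q0 * ?X') *\<^sub>R B2 s" for s
    unfolding vector_derivative_frame_combination[OF assms(2,4) dt dt dt dt, OF assms(11-14)]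
    using assms(16,18) by simp
  have Pq: "vector_derivative (\<lambda>\<rho>. ?P s t0 \<rho>) (at q0 within ?K)
      = (?nq s * W t0) *\<^sub>R B1 s + (?pq s * X t0) *\<^sub>R B2 s" if "s \<in> ?I" for s
    unfolding vector_derivative_frame_combination[OF assms(3,5) dq dq dq dq,
        OF assms(7) that assms(8) that assms(9) that assms(10) that]
    using assms(15,17) by simp
  have condition: "(let Pt = vector_derivative (\<lambda>\<tau>. ?P s \<tau> q0) (at t0 within ?J);
                        Pq = vector_derivative (\<lambda>\<rho>. ?P s t0 \<rho>) (at q0 within ?K)
                    in lin_indep3 (T s) Pt Pq \<and> parallel (N s) (cross4 (T s) Pt Pq))
      \<longleftrightarrow> n s q0 * ?W' * ?pq s * X t0 - ?nq s * W t0 * p s q0 * ?X' \<noteq> 0" if "s \<in> ?I" for s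
    unfolding Let_def Pt Pq[OF that] binormal_plane_isogeodesic_condition_iff[OF frame[OF that]]
    by (simp add: algebra_simps)
  show ?thesis
    unfolding isogeodesic_iff_along_curve[OF assms(1) frenet4_has_vector_derivative[OF assms(6)]]
      ball_conj_distrib[symmetric]
    using on_curve condition by (simp only: conj_assoc cong: ball_cong)
qed

end
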